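(* Assume $C\succ 0$, $A_1,\dots,A_m$ are linearly independent, and $C^{-1}$ is linearly feasible, i.e. $\mathrm{tr}(A_\ell C^{-1})=b_\ell$ for all $\ell$. Let $X(t)$ be a differentiable solution of the general first-ansatz dynamics $$\mathrm{vec}(\dot X(t)) = G\mathcal{A}^T(\mathcal{A}G\mathcal{A}^T)^{-1}b - \mathrm{vec}(X(t)),\qquad G=\tfrac12\bigl(C^{-1}\otimes X(t) + X(t)\otimes C^{-1}\bigr),$$ with $X(0)\succ 0$ (not necessarily linearly feasible). Then at every time $t$ with $X(t)\succ 0$, $$\frac{d}{dt}\ln\det X(t) = b^T(\mathcal{A}G\mathcal{A}^T)^{-1}b - n \ \ge\ -n,$$ and consequently $X(T)\succ 0$ for every finite $T\ge 0$.
   Context: $C,A_1,\dots,A_m$ are symmetric $n\times n$ matrices and $b\in\mathbb{R}^m$. For an $n\times n$ matrix $M$, $\mathrm{vec}(M)\in\mathbb{R}^{n^2}$ is obtained by stacking the columns of $M$; $\otimes$ is the Kronecker product, with $\mathrm{vec}(ABC)=(C^T\otimes A)\mathrm{vec}(B)$. $\mathcal{A}$ is the $m\times n^2$ matrix whose $\ell$-th row is $\mathrm{vec}(A_\ell)^T$. A matrix $X$ is linearly feasible if $\mathcal{A}\,\mathrm{vec}(X)=b$. *)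

theory Defs
  imports "HOL-Analysis.Analysis"
begin

text \<open>n x n real matrices are real^'n^'n (rows indexed first).
  vec stacks columns: the index (j,i) of vecM M (column j, row i) holds M_ij;
  ordering pairs lexicographically gives the usual column stacking.\<close>

definition vecM :: "real^'n^'n \<Rightarrow> real^('n \<times> 'n)" where
  "vecM M = (\<chi> p. M $ snd p $ fst p)"

text \<open>Kronecker product, indexed compatibly with vecM, so that
  vecM (A ** B ** C) = kron (transpose C) A *v vecM B.\<close>
definition kron :: "real^'n^'n \<Rightarrow> real^'n^'n \<Rightarrow> real^('n \<times> 'n)^('n \<times> 'n)" where
  "kron P Q = (\<chi> p q. P $ fst p $ fst q * Q $ snd p $ snd q)"

definition calA :: "('m \<Rightarrow> real^'n^'n) \<Rightarrow> real^('n \<times> 'n)^'m" where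
  "calA A = (\<chi> l. vecM (A l))"

definition symmetric_mat :: "real^'n^'n \<Rightarrow> bool" where
  "symmetric_mat M \<longleftrightarrow> transpose M = M"

definition posdef :: "real^'n^'n \<Rightarrow> bool" where
  "posdef M \<longleftrightarrow> symmetric_mat M \<and> (\<forall>x. x \<noteq> 0 \<longrightarrow> 0 < x \<bullet> (M *v x))"

definition lin_indep_family :: "('m::finite \<Rightarrow> real^'n^'n) \<Rightarrow> bool" where
  "lin_indep_family A \<longleftrightarrow> (\<forall>c. (\<Sum>l\<in>UNIV. c l *\<^sub>R A l) = 0 \<longrightarrow> (\<forall>l. c l = 0))"

definition lin_feasible :: "('m \<Rightarrow> real^'n^'n) \<Rightarrow> real^'m \<Rightarrow> real^'n^'n \<Rightarrow> bool" where
  "lin_feasible A b X \<longleftrightarrow> calA A *v vecM X = b"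

definition Gmat :: "real^'n^'n \<Rightarrow> real^'n^'n \<Rightarrow> real^('n \<times> 'n)^('n \<times> 'n)" where
  "Gmat C X = (1/2) *\<^sub>R (kron (matrix_inv C) X + kron X (matrix_inv C))"

end

theory Submission
  imports Defs
begin

text \<open>Write y for the solution of (A G A^T) y = b and S = sum_l y_l A_l. Since G vec S =
  vec ((X S C^-1 + C^-1 S X^T) / 2), the dynamics read X' = (X S C^-1 + C^-1 S X^T) / 2 - X.
  The antisymmetric part of X therefore decays like e^-t and vanishes, so X stays symmetric.
  By Jacobi's formula the derivative of ln det X is tr (X' X^-1) = tr (C^-1 S) - n, and
  tr (C^-1 S) = <vec C^-1, A^T y> = <A vec C^-1, y> = b^T y because C^-1 is linearly feasible.
  Moreover b^T y = y^T (A G A^T) y >= 0: the Kronecker product of positive definite matrices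
  is positive definite (deform both factors to the identity through invertible symmetric
  matrices), so G is, and A^T is injective by linear independence of the A_l.
  Consequently det X(t) >= det X(0) e^-nt never reaches 0, and a continuous path of
  symmetric matrices starting in the positive definite cone can only leave it through a
  singular matrix.\<close>

lemma matrix_inv_right: "invertible A \<Longrightarrow> A ** matrix_inv A = mat 1"
  unfolding invertible_def matrix_inv_def by (drule someI_ex) blast

lemma matrix_inv_left: "invertible A \<Longrightarrow> matrix_inv A ** A = mat 1"
  unfolding invertible_def matrix_inv_def by (drule someI_ex) blast

lemma invertible_iff_ker_zero:
  fixes M :: "real^'k^'k"
  shows "invertible M \<longleftrightarrow> (\<forall>x. M *v x = 0 \<longrightarrow> x = 0)"
  by (simp add: invertible_left_inverse matrix_left_invertible_ker)

lemma inner_matrix_vector_transpose: "x \<bullet> (M *v y) = (transpose M *v x) \<bullet> (y :: real^'a)"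
  by (simp only: transpose_matrix_vector dot_lmul_matrix)

lemma symmetric_mat_iff_nth: "symmetric_mat M \<longleftrightarrow> (\<forall>i j. M $ i $ j = M $ j $ i)"
  by (auto simp: symmetric_mat_def vec_eq_iff transpose_def)

lemma symmetric_mat_mat: "symmetric_mat (mat c)"
  by (simp add: symmetric_mat_def)

lemma transpose_mat_add: "transpose (P + Q) = transpose P + transpose (Q :: real^'a^'b)"
  by (simp add: vec_eq_iff transpose_def)

lemma symmetric_convex_comb:
  "symmetric_mat P \<Longrightarrow> symmetric_mat Q \<Longrightarrow> symmetric_mat ((1 - s) *\<^sub>R P + s *\<^sub>R Q)"
  by (simp add: symmetric_mat_def transpose_mat_add transpose_scalar)

lemma symmetric_matrix_inv:
  fixes M :: "real^'k^'k"
  assumes "symmetric_mat M" "invertible M"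
  shows "symmetric_mat (matrix_inv M)"
proof -
  let ?N = "matrix_inv M"
  have "transpose ?N ** M = transpose (M ** ?N)"
    using assms(1) by (simp add: symmetric_mat_def matrix_transpose_mul)
  then have left: "transpose ?N ** M = mat 1" by (simp add: matrix_inv_right[OF assms(2)])
  have "transpose ?N = (transpose ?N ** M) ** ?N"
    by (simp add: matrix_inv_right[OF assms(2)] flip: matrix_mul_assoc)
  then show ?thesis unfolding symmetric_mat_def left by simp
qed

lemma matrix_add_rdistrib: "(P + Q) ** R = P ** R + Q ** (R :: real^'n^'n)"
  by (simp add: vec_eq_iff matrix_matrix_mult_def sum.distrib distrib_right)

lemma matrix_diff_rdistrib: "(P - Q) ** R = P ** R - Q ** (R :: real^'n^'n)"
  by (simp add: vec_eq_iff matrix_matrix_mult_def sum_subtractf left_diff_distrib)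

lemma trace_scaleR: "trace (c *\<^sub>R (M :: real^'n^'n)) = c * trace M"
  by (simp add: trace_def sum_distrib_left)

lemma continuous_on_det:
  fixes f :: "real \<Rightarrow> real^'k^'k"
  assumes "continuous_on S f"
  shows "continuous_on S (\<lambda>s. det (f s))"
  unfolding det_def by (intro continuous_intros continuous_on_component assms)

section \<open>Positive definite quadratic forms\<close>

text \<open>Positive definiteness without the symmetry requirement, so that G and A G A^T can be
  treated without proving them symmetric.\<close>

definition pos_form :: "real^'k^'k \<Rightarrow> bool" where
  "pos_form M \<longleftrightarrow> (\<forall>x. x \<noteq> 0 \<longrightarrow> 0 < x \<bullet> (M *v x))"

lemma posdef_iff_pos_form: "posdef M \<longleftrightarrow> symmetric_mat M \<and> pos_form M"
  by (simp add: posdef_def pos_form_def)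

lemma pos_form_mat_1: "pos_form (mat 1 :: real^'k^'k)"
  by (simp add: pos_form_def)

lemma pos_form_nonneg: "pos_form M \<Longrightarrow> 0 \<le> x \<bullet> (M *v x)"
  by (cases "x = 0") (auto simp: pos_form_def less_imp_le)

lemma pos_form_invertible: "pos_form (M :: real^'k^'k) \<Longrightarrow> invertible M"
  unfolding invertible_iff_ker_zero pos_form_def by (metis inner_zero_right less_irrefl)

lemma pos_form_matrix_inv:
  fixes M :: "real^'k^'k"
  assumes "pos_form M"
  shows "pos_form (matrix_inv M)"
  unfolding pos_form_def
proof (intro allI impI)
  fix x :: "real^'k" assume "x \<noteq> 0"
  define y where "y = matrix_inv M *v x"
  have My: "M *v y = x"
    by (simp add: y_def matrix_vector_mul_assoc matrix_inv_right[OF pos_form_invertible[OF assms]])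
  then have "y \<noteq> 0" using \<open>x \<noteq> 0\<close> by auto
  then have "0 < y \<bullet> (M *v y)" using assms by (simp add: pos_form_def)
  moreover have "y \<bullet> (M *v y) = x \<bullet> (matrix_inv M *v x)"
    unfolding My by (simp add: y_def inner_commute)
  ultimately show "0 < x \<bullet> (matrix_inv M *v x)" by simp
qed

lemma pos_form_convex_comb:
  fixes P Q :: "real^'k^'k"
  assumes "pos_form P" "pos_form Q" "0 \<le> s" "s \<le> 1"
  shows "pos_form ((1 - s) *\<^sub>R P + s *\<^sub>R Q)"
  unfolding pos_form_def
proof (intro allI impI)
  fix x :: "real^'k" assume "x \<noteq> 0"
  then have "0 < x \<bullet> (P *v x)" "0 < x \<bullet> (Q *v x)" using assms(1,2) by (auto simp: pos_form_def)
  then have "0 < (1 - s) * (x \<bullet> (P *v x)) + s * (x \<bullet> (Q *v x))"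
    using assms(3,4) by (cases "s = 0") (auto intro: add_nonneg_pos add_pos_nonneg)
  then show "0 < x \<bullet> (((1 - s) *\<^sub>R P + s *\<^sub>R Q) *v x)"
    by (simp add: matrix_vector_mult_add_rdistrib inner_add_right
        flip: scaleR_matrix_vector_assoc)
qed

lemma continuous_on_quadratic_form:
  fixes f :: "real \<Rightarrow> real^'k^'k"
  assumes "continuous_on S f"
  shows "continuous_on S (\<lambda>s. x \<bullet> (f s *v x))"
  unfolding inner_vec_def matrix_vector_mult_def
  by (intro continuous_intros continuous_on_component assms)

lemma pos_form_det_pos:
  fixes M :: "real^'k^'k"
  assumes "pos_form M"
  shows "0 < det M"
proof (rule ccontr)
  let ?h = "\<lambda>s. (1 - s) *\<^sub>R mat 1 + s *\<^sub>R M"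
  assume "\<not> 0 < det M"
  then have "det (?h 1) \<le> 0" "0 \<le> det (?h 0)" by simp_all
  moreover have "continuous_on {0..1} (\<lambda>s. det (?h s))"
    by (intro continuous_on_det continuous_intros)
  ultimately obtain s where s: "0 \<le> s" "s \<le> 1" "det (?h s) = 0"
    using IVT2'[of "\<lambda>s. det (?h s)" 1 0 0] by auto
  have "invertible (?h s)"
    by (rule pos_form_invertible[OF pos_form_convex_comb[OF pos_form_mat_1 assms s(1,2)]])
  then show False using s(3) by (simp add: invertible_det_nz)
qed

lemma quadratic_form_bound:
  fixes K :: "real^'k^'k"
  shows "\<bar>v \<bullet> (K *v v)\<bar> \<le> real CARD('k) * real CARD('k) * norm K * (norm v * norm v)"
proof -
  have entry: "\<bar>K$i$j\<bar> \<le> norm K" for i j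
    by (rule order_trans[OF component_le_norm_cart Finite_Cartesian_Product.norm_nth_le])
  have "norm (K *v v) \<le> onorm ((*v) K) * norm v"
    by (rule onorm[OF matrix_vector_mul_bounded_linear])
  also have "\<dots> \<le> real CARD('k) * real CARD('k) * norm K * norm v"
    by (intro mult_right_mono onorm_le_matrix_component entry norm_ge_zero)
  finally have "norm v * norm (K *v v) \<le> norm v * (real CARD('k) * real CARD('k) * norm K * norm v)"
    by (rule mult_left_mono[OF _ norm_ge_zero])
  then show ?thesis using Cauchy_Schwarz_ineq2[of v "K *v v"] by (simp add: mult_ac)
qed

lemma pos_form_coercive:
  fixes M :: "real^'k^'k"
  assumes "pos_form M"
  obtains m where "0 < m" "\<And>v. norm v = 1 \<Longrightarrow> m \<le> v \<bullet> (M *v v)"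
proof -
  obtain w :: "real^'k" where "norm w = 1" using vector_choose_size[of 1] by auto
  moreover have "continuous_on (sphere 0 1) (\<lambda>x::real^'k. x \<bullet> (M *v x))"
    by (intro continuous_intros)
  ultimately obtain u where u: "norm u = 1" and min: "\<And>v. norm v = 1 \<Longrightarrow> u \<bullet> (M *v u) \<le> v \<bullet> (M *v v)"
    using continuous_attains_inf[of "sphere 0 1" "\<lambda>x. x \<bullet> (M *v x)"] by fastforce
  have "u \<noteq> 0" using u by auto
  then have "0 < u \<bullet> (M *v u)" using assms by (simp add: pos_form_def)
  then show ?thesis using that min by blast
qed

lemma pos_form_nhds:
  fixes M :: "real^'k^'k"
  assumes "pos_form M"
  obtains e where "0 < e" "\<And>N. norm (N - M) < e \<Longrightarrow> pos_form N"
proof -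
  obtain m where m: "0 < m" "\<And>v. norm v = 1 \<Longrightarrow> m \<le> v \<bullet> (M *v v)"
    using pos_form_coercive[OF assms] by blast
  define K where "K = real CARD('k) * real CARD('k) + 1"
  have K: "0 < K" by (simp add: K_def add_pos_nonneg)
  have "pos_form N" if N: "norm (N - M) < m / K" for N
    unfolding pos_form_def
  proof (intro allI impI)
    fix x :: "real^'k" assume "x \<noteq> 0"
    define v where "v = (1 / norm x) *\<^sub>R x"
    have v: "norm v = 1" using \<open>x \<noteq> 0\<close> by (simp add: v_def)
    have "\<bar>v \<bullet> ((N - M) *v v)\<bar> \<le> real CARD('k) * real CARD('k) * norm (N - M)"
      using quadratic_form_bound[of v "N - M"] v by simp
    also have "\<dots> \<le> K * norm (N - M)" by (simp add: K_def distrib_right)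
    also have "\<dots> < m" using N K by (simp add: field_simps)
    finally have "0 < v \<bullet> (N *v v)"
      using m(2)[OF v] by (simp add: matrix_vector_mult_diff_rdistrib inner_diff_right)
    moreover have "x \<bullet> (N *v x) = (norm x * norm x) * (v \<bullet> (N *v v))"
      using \<open>x \<noteq> 0\<close> by (simp add: v_def matrix_vector_mult_scaleR)
    ultimately show "0 < x \<bullet> (N *v x)" using \<open>x \<noteq> 0\<close> by simp
  qed
  then show ?thesis using m(1) K by (intro that[of "m / K"]) auto
qed

lemma pos_form_near:
  fixes f :: "real \<Rightarrow> real^'k^'k"
  assumes "continuous_on S f" "\<sigma> \<in> S" "pos_form (f \<sigma>)"
  obtains d where "0 < d" "\<And>s. s \<in> S \<Longrightarrow> dist s \<sigma> < d \<Longrightarrow> pos_form (f s)"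
proof -
  obtain e where e: "0 < e" "\<And>N. norm (N - f \<sigma>) < e \<Longrightarrow> pos_form N"
    using pos_form_nhds[OF assms(3)] by blast
  then obtain d where "0 < d" "\<And>s. s \<in> S \<Longrightarrow> dist s \<sigma> < d \<Longrightarrow> dist (f s) (f \<sigma>) < e"
    using continuous_on_iff[THEN iffD1, OF assms(1)] assms(2) by meson
  then show ?thesis using that e(2) by (simp add: dist_norm)
qed

lemma quadratic_linear_term_zero:
  fixes a c :: real
  assumes "\<And>t. 0 \<le> t * a + t * t * c"
  shows "a = 0"
proof (rule ccontr)
  assume "a \<noteq> 0"
  define K where "K = 2 * (\<bar>c\<bar> + 1)"
  have K: "K > 0" "c / K < 1" by (auto simp: K_def field_simps abs_if)
  define t where "t = - a / K"
  have "0 < a * a" using \<open>a \<noteq> 0\<close> not_real_square_gt_zero by blast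
  then have "0 < a * a / K * (1 - c / K)" using K by simp
  moreover have "t * a + t * t * c = - (a * a / K * (1 - c / K))"
    using K by (simp add: t_def field_simps)
  ultimately show False using assms[of t] by linarith
qed

lemma pos_form_if_nonneg_nonsingular:
  fixes M :: "real^'k^'k"
  assumes sym: "symmetric_mat M" and nonneg: "\<And>x. 0 \<le> x \<bullet> (M *v x)" and "det M \<noteq> 0"
  shows "pos_form M"
  unfolding pos_form_def
proof (intro allI impI)
  fix x :: "real^'k" assume "x \<noteq> 0"
  show "0 < x \<bullet> (M *v x)"
  proof (rule ccontr)
    assume "\<not> 0 < x \<bullet> (M *v x)"
    then have x0: "x \<bullet> (M *v x) = 0" using nonneg[of x] by linarith
    define y where "y = M *v x"
    have "x \<bullet> (M *v y) = (transpose M *v x) \<bullet> y"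
      by (simp add: dot_lmul_matrix)
    also have "\<dots> = y \<bullet> y" using sym by (simp add: y_def symmetric_mat_def)
    finally have "(x + t *\<^sub>R y) \<bullet> (M *v (x + t *\<^sub>R y)) = t * (2 * (y \<bullet> y)) + t * t * (y \<bullet> (M *v y))" for t
      using x0 by (simp add: y_def matrix_vector_right_distrib matrix_vector_mult_scaleR
          inner_add_left inner_add_right inner_commute algebra_simps)
    then have "2 * (y \<bullet> y) = 0" by (metis quadratic_linear_term_zero nonneg)
    then have "M *v x = 0" by (simp add: y_def)
    then show False
      using \<open>x \<noteq> 0\<close> \<open>det M \<noteq> 0\<close> by (simp add: invertible_iff_ker_zero flip: invertible_det_nz)
  qed
qed

lemma le_at_left_endpoint:
  fixes g :: "real \<Rightarrow> real"
  assumes "a < s" "continuous_on {a..s} g" "\<And>u. u \<in> {a..<s} \<Longrightarrow> c \<le> g u"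
  shows "c \<le> g s"
proof (rule tendsto_lowerbound)
  show "(g \<longlongrightarrow> g s) (at_left s)"
    using assms(1,2) by (rule continuous_on_Icc_at_leftD[rotated])
  show "eventually (\<lambda>u. c \<le> g u) (at_left s)"
    using eventually_at_left_real[OF assms(1)] by eventually_elim (use assms(3) in auto)
qed simp

lemma pos_form_left_limit:
  fixes f :: "real \<Rightarrow> real^'k^'k"
  assumes "0 < \<sigma>" "continuous_on {0..\<sigma>} f" "\<And>u. u \<in> {0..<\<sigma>} \<Longrightarrow> pos_form (f u)"
    and "symmetric_mat (f \<sigma>)" "det (f \<sigma>) \<noteq> 0"
  shows "pos_form (f \<sigma>)"
proof (rule pos_form_if_nonneg_nonsingular[OF assms(4) _ assms(5)])
  fix x
  show "0 \<le> x \<bullet> (f \<sigma> *v x)"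
    using le_at_left_endpoint[OF assms(1) continuous_on_quadratic_form[OF assms(2)]]
      pos_form_nonneg[OF assms(3)] by blast
qed

lemma pos_form_continuation:
  fixes f :: "real \<Rightarrow> real^'k^'k"
  assumes "0 \<le> T" and cont: "continuous_on {0..T} f"
    and sym: "\<And>s. s \<in> {0..T} \<Longrightarrow> symmetric_mat (f s)"
    and start: "pos_form (f 0)"
    and nonsingular: "\<And>s. s \<in> {0<..T} \<Longrightarrow> (\<And>u. u \<in> {0..<s} \<Longrightarrow> pos_form (f u)) \<Longrightarrow> det (f s) \<noteq> 0"
  shows "pos_form (f T)"
proof (rule ccontr)
  define B where "B = {s \<in> {0..T}. \<not> pos_form (f s)}"
  define \<sigma> where "\<sigma> = Inf B"
  assume "\<not> pos_form (f T)"
  then have "T \<in> B" using \<open>0 \<le> T\<close> by (simp add: B_def)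
  have bdd: "bdd_below B" by (auto simp: B_def bdd_below_def)
  have "0 \<le> \<sigma>" unfolding \<sigma>_def using \<open>T \<in> B\<close> by (intro cInf_greatest) (auto simp: B_def)
  moreover have "\<sigma> \<le> T" unfolding \<sigma>_def using \<open>T \<in> B\<close> bdd by (rule cInf_lower)
  ultimately have \<sigma>: "\<sigma> \<in> {0..T}" by simp
  have before: "pos_form (f u)" if u: "u \<in> {0..<\<sigma>}" for u
  proof (rule ccontr)
    assume "\<not> pos_form (f u)"
    then have "u \<in> B" using u \<sigma> by (simp add: B_def)
    then have "\<sigma> \<le> u" unfolding \<sigma>_def using bdd by (rule cInf_lower)
    then show False using u by simp
  qed
  have "pos_form (f \<sigma>)"
  proof (cases "\<sigma> = 0")
    case False
    then have pos: "\<sigma> \<in> {0<..T}" using \<sigma> by simp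
    have "continuous_on {0..\<sigma>} f" using cont by (rule continuous_on_subset) (use \<sigma> in auto)
    from pos_form_left_limit[OF _ this before sym[OF \<sigma>] nonsingular[OF pos before]] pos
    show ?thesis by simp
  qed (use start in simp)
  then obtain d where d: "0 < d" "\<And>s. s \<in> {0..T} \<Longrightarrow> dist s \<sigma> < d \<Longrightarrow> pos_form (f s)"
    using pos_form_near[OF cont \<sigma>] by blast
  obtain s where "s \<in> B" "s < \<sigma> + d"
    using cInf_less_iff[of B "\<sigma> + d"] \<open>T \<in> B\<close> bdd d(1) unfolding \<sigma>_def by auto
  moreover have "\<sigma> \<le> s" unfolding \<sigma>_def using \<open>s \<in> B\<close> bdd by (rule cInf_lower)
  ultimately show False using d(2)[of s] by (simp add: B_def dist_real_def)
qed

section \<open>Vectorization and Kronecker products\<close>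

lemma vecM_nth [simp]: "vecM M $ p = M $ snd p $ fst p"
  by (simp add: vecM_def)

lemma vecM_eq_iff: "vecM M = vecM N \<longleftrightarrow> M = N"
  by (auto simp: vec_eq_iff)

lemma vecM_add: "vecM (M + N) = vecM M + vecM N"
  by (simp add: vec_eq_iff)

lemma vecM_diff: "vecM (M - N) = vecM M - vecM N"
  by (simp add: vec_eq_iff)

lemma vecM_scaleR: "vecM (c *\<^sub>R M) = c *\<^sub>R vecM M"
  by (simp add: vec_eq_iff)

lemma sum_UNIV_prod:
  "sum f (UNIV :: ('a::finite \<times> 'b::finite) set) = (\<Sum>a\<in>UNIV. \<Sum>b\<in>UNIV. f (a, b))"
  unfolding sum.cartesian_product UNIV_Times_UNIV by simp

lemma kron_mult_vecM: "kron P Q *v vecM B = vecM (Q ** B ** transpose P)"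
proof -
  have "(kron P Q *v vecM B) $ (j, i) = (\<Sum>k\<in>UNIV. \<Sum>l\<in>UNIV. P$j$k * Q$i$l * B$l$k)" for i j
    by (simp add: matrix_vector_mult_def kron_def sum_UNIV_prod)
  then show ?thesis
    by (simp add: vec_eq_iff matrix_matrix_mult_def transpose_def sum_distrib_right
        sum_distrib_left mult_ac)
qed

lemma inner_vecM: "vecM M \<bullet> vecM N = trace (transpose M ** N)"
  by (simp add: inner_vec_def sum_UNIV_prod trace_def matrix_matrix_mult_def transpose_def)

lemma kron_mult_kron: "kron P Q ** kron P' Q' = kron (P ** P') (Q ** Q')"
  by (simp add: vec_eq_iff kron_def matrix_matrix_mult_def sum_UNIV_prod sum_product mult_ac)

lemma kron_mat_1: "kron (mat 1) (mat 1) = (mat 1 :: real^('k::finite \<times> 'k)^('k \<times> 'k))"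
  by (auto simp: vec_eq_iff kron_def mat_def prod_eq_iff)

lemma invertible_kron:
  fixes P Q :: "real^'k^'k"
  assumes "invertible P" "invertible Q"
  shows "invertible (kron P Q)"
  unfolding invertible_def using assms
  by (intro exI[of _ "kron (matrix_inv P) (matrix_inv Q)"])
    (simp add: kron_mult_kron matrix_inv_left matrix_inv_right kron_mat_1)

lemma transpose_kron: "transpose (kron P Q) = kron (transpose P) (transpose Q)"
  by (simp add: vec_eq_iff kron_def transpose_def)

lemma symmetric_kron: "symmetric_mat P \<Longrightarrow> symmetric_mat Q \<Longrightarrow> symmetric_mat (kron P Q)"
  by (simp add: symmetric_mat_def transpose_kron)

lemma pos_form_kron:
  fixes P Q :: "real^'k^'k"
  assumes "pos_form P" "symmetric_mat P" "pos_form Q" "symmetric_mat Q"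
  shows "pos_form (kron P Q)"
proof -
  let ?seg = "\<lambda>M s. (1 - s) *\<^sub>R mat 1 + s *\<^sub>R (M :: real^'k^'k)"
  define h where "h s = kron (?seg P s) (?seg Q s)" for s
  have "pos_form (h 1)"
  proof (rule pos_form_continuation)
    show "continuous_on {0..1} h"
      unfolding h_def kron_def by (intro continuous_intros continuous_on_component)
    show "symmetric_mat (h s)" for s
      using assms unfolding h_def by (intro symmetric_kron symmetric_convex_comb symmetric_mat_mat)
    show "pos_form (h 0)" by (simp add: h_def kron_mat_1 pos_form_mat_1)
    show "det (h s) \<noteq> 0" if "s \<in> {0<..1}" for s
    proof -
      have "invertible (?seg M s)" if "pos_form M" for M
        using \<open>s \<in> {0<..1}\<close> by (intro pos_form_invertible pos_form_convex_comb pos_form_mat_1 that) auto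
      then show ?thesis
        using assms by (simp add: h_def invertible_kron flip: invertible_det_nz)
    qed
  qed simp
  then show ?thesis by (simp add: h_def)
qed

lemma Gmat_mult_vecM:
  assumes "symmetric_mat (matrix_inv C)"
  shows "Gmat C Y *v vecM S =
    vecM ((1/2) *\<^sub>R (Y ** S ** matrix_inv C + matrix_inv C ** S ** transpose Y))"
  using assms
  by (simp add: Gmat_def kron_mult_vecM vecM_add vecM_scaleR symmetric_mat_def
      matrix_vector_mult_add_rdistrib flip: scaleR_matrix_vector_assoc)

lemma pos_form_Gmat:
  fixes C Y :: "real^'n^'n"
  assumes "pos_form (matrix_inv C)" "symmetric_mat (matrix_inv C)" "pos_form Y" "symmetric_mat Y"
  shows "pos_form (Gmat C Y)"
  unfolding pos_form_def
proof (intro allI impI)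
  fix x :: "real^('n \<times> 'n)" assume "x \<noteq> 0"
  then have "0 < x \<bullet> (kron (matrix_inv C) Y *v x) + x \<bullet> (kron Y (matrix_inv C) *v x)"
    using pos_form_kron[OF assms] pos_form_kron[OF assms(3,4,1,2)]
    by (intro add_pos_pos) (auto simp: pos_form_def)
  then show "0 < x \<bullet> (Gmat C Y *v x)"
    by (simp add: Gmat_def matrix_vector_mult_add_rdistrib inner_add_right
        flip: scaleR_matrix_vector_assoc)
qed

lemma calA_transpose_mult: "transpose (calA A) *v y = vecM (\<Sum>l\<in>UNIV. y$l *\<^sub>R A l)"
  by (simp add: vec_eq_iff matrix_vector_mult_def calA_def transpose_def mult.commute)

lemma calA_transpose_ker_zero:
  assumes "lin_indep_family A" "transpose (calA A) *v y = 0"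
  shows "y = 0"
proof -
  have "vecM (\<Sum>l\<in>UNIV. y$l *\<^sub>R A l) = vecM 0"
    using assms(2) by (simp only: calA_transpose_mult) (simp add: vec_eq_iff)
  then have "\<forall>l. y$l = 0" using assms(1) unfolding vecM_eq_iff lin_indep_family_def by blast
  then show ?thesis by (simp add: vec_eq_iff)
qed

lemma pos_form_congruence:
  fixes G :: "real^'k^'k" and B :: "real^'m^'k"
  assumes "pos_form G" "\<And>y. B *v y = 0 \<Longrightarrow> y = 0"
  shows "pos_form (transpose B ** G ** B)"
  unfolding pos_form_def
proof (intro allI impI)
  fix y :: "real^'m" assume "y \<noteq> 0"
  then have "0 < (B *v y) \<bullet> (G *v (B *v y))" using assms by (auto simp: pos_form_def)
  then show "0 < y \<bullet> ((transpose B ** G ** B) *v y)"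
    by (simp only: inner_matrix_vector_transpose[of y "transpose B"] transpose_transpose
        flip: matrix_vector_mul_assoc)
qed

lemma inverse_form_nonneg:
  fixes M :: "real^'k^'k"
  assumes "pos_form M"
  shows "0 \<le> b \<bullet> (matrix_inv M *v b)"
proof -
  have "b = M *v (matrix_inv M *v b)"
    by (simp add: matrix_vector_mul_assoc matrix_inv_right[OF pos_form_invertible[OF assms]])
  then have "b \<bullet> (matrix_inv M *v b) = (matrix_inv M *v b) \<bullet> (M *v (matrix_inv M *v b))"
    by (metis inner_commute)
  then show ?thesis using pos_form_nonneg[OF assms] by simp
qed

lemma trace_mult_combination:
  assumes "symmetric_mat P"
  shows "trace (P ** (\<Sum>l\<in>UNIV. y$l *\<^sub>R A l)) = (calA A *v vecM P) \<bullet> y"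
proof -
  have "trace (P ** (\<Sum>l\<in>UNIV. y$l *\<^sub>R A l)) = vecM P \<bullet> (transpose (calA A) *v y)"
    using assms by (simp only: calA_transpose_mult inner_vecM symmetric_mat_def)
  also have "\<dots> = (calA A *v vecM P) \<bullet> y"
    by (simp only: inner_matrix_vector_transpose transpose_transpose)
  finally show ?thesis .
qed

section \<open>Jacobi's formula\<close>

lemma has_field_derivative_prod_within:
  assumes "\<And>i. i \<in> I \<Longrightarrow> (f i has_field_derivative f' i) (at z within S)"
  shows "((\<lambda>u. \<Prod>i\<in>I. f i u) has_field_derivative (\<Sum>i\<in>I. f' i * (\<Prod>j\<in>I - {i}. f j z)))
    (at z within S)"
proof -
  have "((\<lambda>u. \<Prod>i\<in>I. f i u) has_derivative (\<lambda>y. \<Sum>i\<in>I. f' i * y * (\<Prod>j\<in>I - {i}. f j z)))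
      (at z within S)"
    using assms by (intro has_derivative_prod) (simp add: has_field_derivative_def)
  moreover have "(\<lambda>y. \<Sum>i\<in>I. f' i * y * (\<Prod>j\<in>I - {i}. f j z)) = (*) (\<Sum>i\<in>I. f' i * (\<Prod>j\<in>I - {i}. f j z))"
    by (auto simp: fun_eq_iff sum_distrib_left sum_distrib_right mult_ac)
  ultimately show ?thesis by (simp add: has_field_derivative_def)
qed

lemma has_real_derivative_entry:
  fixes X :: "real \<Rightarrow> real^'n^'m"
  assumes "(X has_vector_derivative D) F"
  shows "((\<lambda>s. X s $ i $ j) has_real_derivative D $ i $ j) F"
proof -
  have "bounded_linear (\<lambda>M::real^'n^'m. M $ i $ j)"
    using bounded_linear_compose[OF bounded_linear_vec_nth[of j] bounded_linear_vec_nth[of i]]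
    by (simp add: o_def)
  then show ?thesis
    using bounded_linear.has_vector_derivative assms
    by (fastforce simp: has_real_derivative_iff_has_vector_derivative)
qed

lemma det_replace_row:
  fixes X D :: "real^'n^'n"
  shows "det (\<chi> i. if i = k then D$i else X$i) =
    (\<Sum>p\<in>{p. p permutes (UNIV::'n set)}. of_int (sign p) * (D$k$p k * (\<Prod>i\<in>UNIV - {k}. X$i$p i)))"
proof -
  have "(\<Prod>i\<in>UNIV. (\<chi> i. if i = k then D$i else X$i) $ i $ p i) = D$k$p k * (\<Prod>i\<in>UNIV - {k}. X$i$p i)"
    for p by (simp add: prod.remove[of UNIV k] cong: prod.cong_simp)
  then show ?thesis unfolding det_def by simp
qed

lemma has_real_derivative_det_rows:
  fixes X :: "real \<Rightarrow> real^'n^'n"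
  assumes "(X has_vector_derivative D) (at t within S)"
  shows "((\<lambda>s. det (X s)) has_real_derivative
            (\<Sum>k\<in>UNIV. det (\<chi> i. if i = k then D$i else X t $ i))) (at t within S)"
proof -
  have "((\<lambda>s. det (X s)) has_real_derivative
      (\<Sum>p\<in>{p. p permutes (UNIV::'n set)}. of_int (sign p) *
          (\<Sum>k\<in>UNIV. D$k$p k * (\<Prod>i\<in>UNIV - {k}. X t$i$p i)))) (at t within S)"
    unfolding det_def
    by (intro DERIV_sum DERIV_cmult has_field_derivative_prod_within has_real_derivative_entry assms)
  then show ?thesis
    unfolding det_replace_row sum_distrib_left by (subst sum.swap)
qed

lemma det_replace_row_invertible:
  fixes X D :: "real^'n^'n"
  assumes "invertible X"
  shows "det (\<chi> i. if i = k then D$i else X$i) = (D ** matrix_inv X) $ k $ k * det X"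
proof -
  define x where "x = (D ** matrix_inv X) $ k"
  have "D = (D ** matrix_inv X) ** X"
    by (simp add: matrix_inv_left[OF assms] flip: matrix_mul_assoc)
  then have "D$k$j = ((D ** matrix_inv X) ** X)$k$j" for j by simp
  then have "D$k = (\<Sum>i\<in>UNIV. x$i *s row i X)"
    by (simp add: vec_eq_iff x_def row_def matrix_matrix_mult_def[of "D ** matrix_inv X" X])
  then have "det (\<chi> i. if i = k then D$i else X$i) =
        det (\<chi> i. if i = k then (\<Sum>i\<in>UNIV. x$i *s row i X) else row i X)"
    by (intro arg_cong[where f=det]) (auto simp: vec_eq_iff row_def)
  also have "\<dots> = x$k * det X" by (rule cramer_lemma_transpose)
  finally show ?thesis by (simp add: x_def)
qed

lemma has_real_derivative_ln_det:
  fixes X :: "real \<Rightarrow> real^'n^'n"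
  assumes "(X has_vector_derivative D) (at t within S)" "0 < det (X t)"
  shows "((\<lambda>s. ln (det (X s))) has_real_derivative trace (D ** matrix_inv (X t))) (at t within S)"
proof -
  have "invertible (X t)" using assms(2) by (simp add: invertible_det_nz)
  then have "(\<Sum>k\<in>UNIV. det (\<chi> i. if i = k then D$i else X t $ i)) =
      det (X t) * trace (D ** matrix_inv (X t))"
    by (simp add: det_replace_row_invertible trace_def sum_distrib_left mult.commute)
  then have "((\<lambda>s. det (X s)) has_real_derivative det (X t) * trace (D ** matrix_inv (X t)))
      (at t within S)"
    using has_real_derivative_det_rows[OF assms(1)] by simp
  from DERIV_chain2[OF DERIV_ln_divide[OF assms(2)] this] show ?thesis
    using assms(2) by simp
qed

lemma trace_relaxation_mult_inverse:
  fixes Y S P :: "real^'n^'n"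
  assumes "invertible Y"
  shows "trace (((1/2) *\<^sub>R (Y ** S ** P + P ** S ** Y) - Y) ** matrix_inv Y) =
    trace (P ** S) - real CARD('n)"
proof -
  have "trace (Y ** S ** P ** matrix_inv Y) = trace (matrix_inv Y ** (Y ** S ** P))"
    by (rule trace_mul_sym)
  also have "matrix_inv Y ** (Y ** S ** P) = (matrix_inv Y ** Y) ** (S ** P)"
    by (simp only: matrix_mul_assoc)
  also have "\<dots> = S ** P" by (simp add: matrix_inv_left[OF assms])
  also have "trace (S ** P) = trace (P ** S)" by (rule trace_mul_sym)
  finally have "trace (Y ** S ** P ** matrix_inv Y) = trace (P ** S)" .
  moreover have "P ** S ** Y ** matrix_inv Y = P ** S"
    by (simp add: matrix_inv_right[OF assms] flip: matrix_mul_assoc)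
  ultimately show ?thesis
    by (simp add: matrix_diff_rdistrib matrix_add_rdistrib trace_sub trace_add trace_scaleR
        matrix_inv_right[OF assms] trace_I flip: scalar_matrix_assoc)
qed

section \<open>Two scalar differential inequalities\<close>

lemma zero_if_derivative_minus_self:
  fixes d :: "real \<Rightarrow> real"
  assumes "\<And>x. 0 \<le> x \<Longrightarrow> (d has_real_derivative - d x) (at x within {0..})" "d 0 = 0" "0 \<le> t"
  shows "d t = 0"
proof -
  have "\<exists>c. \<forall>x\<in>{0..}. exp x * d x = c"
  proof (rule has_field_derivative_zero_constant)
    fix x :: real assume "x \<in> {0..}"
    then show "((\<lambda>x. exp x * d x) has_real_derivative 0) (at x within {0..})"
      using DERIV_mult[OF DERIV_exp[THEN DERIV_subset] assms(1)] by simp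
  qed (rule convex_real_interval)
  then obtain c where "\<And>x. 0 \<le> x \<Longrightarrow> exp x * d x = c" by auto
  from this[of 0] this[of t] show ?thesis using assms(2,3) by simp
qed

lemma lower_bound_by_derivative:
  fixes h :: "real \<Rightarrow> real"
  assumes deriv: "\<And>x. x \<in> {0..<s} \<Longrightarrow> (h has_real_derivative h' x) (at x within {0..})"
    and bound: "\<And>x. x \<in> {0..<s} \<Longrightarrow> - k \<le> h' x"
    and "u \<in> {0..<s}"
  shows "h 0 - k * u \<le> h u"
proof -
  let ?g = "\<lambda>x. h x + k * x"
  have g: "(?g has_real_derivative h' x + k) (at x within {0..})" if "x \<in> {0..<s}" for x
    using deriv[OF that] by (auto intro!: derivative_eq_intros)
  have "?g 0 \<le> ?g u"
  proof (rule DERIV_nonneg_imp_increasing_open[of 0 u ?g])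
    fix x assume "0 < x" "x < u"
    then have "x \<in> {0..<s}" using \<open>u \<in> {0..<s}\<close> by auto
    then have "(?g has_real_derivative h' x + k) (at x within {0<..})"
      by (intro DERIV_subset[OF g]) auto
    then have "(?g has_real_derivative h' x + k) (at x)"
      using at_within_open[of x "{0<..}"] \<open>0 < x\<close> by simp
    then show "\<exists>y. (?g has_real_derivative y) (at x) \<and> 0 \<le> y"
      using bound[OF \<open>x \<in> {0..<s}\<close>] by (intro exI[of _ "h' x + k"]) simp
  next
    show "continuous_on {0..u} ?g"
      using \<open>u \<in> {0..<s}\<close> by (intro DERIV_continuous_on[OF DERIV_subset[OF g]]) auto
  qed (use \<open>u \<in> {0..<s}\<close> in simp)
  then show ?thesis by simp
qed

section \<open>The dynamics\<close>

context
  fixes C :: "real^'n::finite^'n" and A :: "'m::finite \<Rightarrow> real^'n^'n" and b :: "real^'m"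
    and X Xd :: "real \<Rightarrow> real^'n^'n"
  assumes C_pd: "posdef C"
    and A_sym: "\<And>l. symmetric_mat (A l)"
    and A_indep: "lin_indep_family A"
    and Cinv_feas: "lin_feasible A b (matrix_inv C)"
    and deriv: "\<And>t. t \<ge> 0 \<Longrightarrow> (X has_vector_derivative Xd t) (at t within {0..})"
    and ode: "\<And>t. t \<ge> 0 \<Longrightarrow>
       vecM (Xd t) = Gmat C (X t) *v (transpose (calA A) *v
           (matrix_inv (calA A ** Gmat C (X t) ** transpose (calA A)) *v b)) - vecM (X t)"
    and X0: "posdef (X 0)"
begin

abbreviation (input) coeffs :: "real \<Rightarrow> real^'m" where
  "coeffs t \<equiv> matrix_inv (calA A ** Gmat C (X t) ** transpose (calA A)) *v b"

definition dual :: "real \<Rightarrow> real^'n^'n" where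
  "dual t = (\<Sum>l\<in>UNIV. coeffs t $ l *\<^sub>R A l)"

lemma Cinv_symmetric: "symmetric_mat (matrix_inv C)"
  using C_pd by (simp add: posdef_iff_pos_form symmetric_matrix_inv pos_form_invertible)

lemma Cinv_pos_form: "pos_form (matrix_inv C)"
  using C_pd by (simp add: posdef_iff_pos_form pos_form_matrix_inv)

lemma flow_eq:
  assumes "t \<ge> 0"
  shows "Xd t = (1/2) *\<^sub>R (X t ** dual t ** matrix_inv C + matrix_inv C ** dual t ** transpose (X t)) - X t"
proof -
  have "vecM (Xd t) = Gmat C (X t) *v vecM (dual t) - vecM (X t)"
    using ode[OF assms] by (simp only: dual_def calA_transpose_mult)
  then show ?thesis
    by (simp add: Gmat_mult_vecM[OF Cinv_symmetric] flip: vecM_eq_iff vecM_diff)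
qed

lemma dual_symmetric: "symmetric_mat (dual t)"
  using A_sym by (simp add: dual_def symmetric_mat_iff_nth)

lemma flow_symmetric:
  assumes "t \<ge> 0"
  shows "symmetric_mat (X t)"
proof -
  have "X t $ i $ j - X t $ j $ i = 0" for i j
  proof (rule zero_if_derivative_minus_self[OF _ _ assms])
    fix x :: real assume "0 \<le> x"
    define W where "W = (1/2) *\<^sub>R (X x ** dual x ** matrix_inv C + matrix_inv C ** dual x ** transpose (X x))"
    have "symmetric_mat W"
      using Cinv_symmetric dual_symmetric[of x]
      by (simp add: W_def symmetric_mat_def transpose_scalar transpose_mat_add
          matrix_transpose_mul matrix_mul_assoc add.commute)
    then have "Xd x $ i $ j - Xd x $ j $ i = - (X x $ i $ j - X x $ j $ i)"
      using flow_eq[OF \<open>0 \<le> x\<close>] by (simp add: W_def[symmetric] symmetric_mat_iff_nth)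
    moreover have "((\<lambda>s. X s $ i $ j - X s $ j $ i) has_real_derivative Xd x $ i $ j - Xd x $ j $ i)
        (at x within {0..})"
      using deriv[OF \<open>0 \<le> x\<close>] by (intro DERIV_diff has_real_derivative_entry)
    ultimately show "((\<lambda>s. X s $ i $ j - X s $ j $ i) has_real_derivative
        - (X x $ i $ j - X x $ j $ i)) (at x within {0..})"
      by simp
  next
    show "X 0 $ i $ j - X 0 $ j $ i = 0"
      using X0 by (simp add: posdef_iff_pos_form symmetric_mat_iff_nth)
  qed
  then show ?thesis by (simp add: symmetric_mat_iff_nth)
qed

lemma pos_form_gram:
  assumes "t \<ge> 0" "posdef (X t)"
  shows "pos_form (calA A ** Gmat C (X t) ** transpose (calA A))"
proof -
  have "pos_form (Gmat C (X t))"
    using assms(2) by (intro pos_form_Gmat Cinv_pos_form Cinv_symmetric) (simp_all add: posdef_iff_pos_form)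
  moreover have "\<And>y. transpose (calA A) *v y = 0 \<Longrightarrow> y = 0"
    using calA_transpose_ker_zero[OF A_indep] by blast
  ultimately have "pos_form (transpose (transpose (calA A)) ** Gmat C (X t) ** transpose (calA A))"
    by (rule pos_form_congruence)
  then show ?thesis by simp
qed

lemma ln_det_flow_derivative:
  assumes "t \<ge> 0" "posdef (X t)"
  shows "((\<lambda>s. ln (det (X s))) has_real_derivative b \<bullet> coeffs t - real CARD('n)) (at t within {0..})"
proof -
  have "invertible (X t)" "0 < det (X t)"
    using assms(2) by (simp_all add: posdef_iff_pos_form pos_form_invertible pos_form_det_pos)
  moreover have "trace (matrix_inv C ** dual t) = b \<bullet> coeffs t"
    using Cinv_feas by (simp add: dual_def trace_mult_combination[OF Cinv_symmetric] lin_feasible_def)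
  ultimately show ?thesis
    using has_real_derivative_ln_det[OF deriv[OF assms(1)]] assms(2)
    by (simp add: flow_eq[OF assms(1)] trace_relaxation_mult_inverse posdef_def symmetric_mat_def)
qed

lemma ln_det_flow_lower_bound:
  assumes "\<And>x. x \<in> {0..<s} \<Longrightarrow> posdef (X x)" "u \<in> {0..<s}"
  shows "ln (det (X 0)) - real CARD('n) * u \<le> ln (det (X u))"
proof (rule lower_bound_by_derivative[OF _ _ assms(2)])
  fix x assume x: "x \<in> {0..<s}"
  show "((\<lambda>s. ln (det (X s))) has_real_derivative b \<bullet> coeffs x - real CARD('n)) (at x within {0..})"
    using ln_det_flow_derivative[of x] assms(1)[OF x] x by simp
  show "- real CARD('n) \<le> b \<bullet> coeffs x - real CARD('n)"
    using inverse_form_nonneg[OF pos_form_gram[OF _ assms(1)[OF x]]] x by simp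
qed

lemma flow_posdef:
  assumes "T \<ge> 0"
  shows "posdef (X T)"
proof -
  have cont: "continuous_on {0..} X"
    using has_vector_derivative_continuous[OF deriv] by (auto simp: continuous_on_eq_continuous_within)
  have "pos_form (X T)"
  proof (rule pos_form_continuation[OF assms])
    show "continuous_on {0..T} X" using cont by (rule continuous_on_subset) auto
    show "symmetric_mat (X s)" if "s \<in> {0..T}" for s using flow_symmetric that by simp
    show "pos_form (X 0)" using X0 by (simp add: posdef_iff_pos_form)
  next
    fix s assume s: "s \<in> {0<..T}" and before: "\<And>u. u \<in> {0..<s} \<Longrightarrow> pos_form (X u)"
    have pd: "posdef (X u)" if "u \<in> {0..<s}" for u
      using before[OF that] flow_symmetric that by (simp add: posdef_iff_pos_form)
    define c where "c = exp (ln (det (X 0)) - real CARD('n) * s)"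
    have "c \<le> det (X u)" if u: "u \<in> {0..<s}" for u
    proof -
      have "real CARD('n) * u \<le> real CARD('n) * s" using u by (simp add: mult_left_mono)
      then have "ln (det (X 0)) - real CARD('n) * s \<le> ln (det (X u))"
        using ln_det_flow_lower_bound[OF pd u] by linarith
      moreover have "0 < det (X u)" using pd[OF u] by (simp add: posdef_iff_pos_form pos_form_det_pos)
      ultimately show ?thesis unfolding c_def by (simp flip: ln_ge_iff)
    qed
    moreover have "continuous_on {0..s} (\<lambda>u. det (X u))"
      using cont by (intro continuous_on_det continuous_on_subset[OF cont]) auto
    ultimately have "c \<le> det (X s)"
      using s le_at_left_endpoint[of 0 s "\<lambda>u. det (X u)" c] by auto
    then show "det (X s) \<noteq> 0" by (auto simp: c_def)
  qed
  then show ?thesis using flow_symmetric[OF assms] by (simp add: posdef_iff_pos_form)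
qed

end

theorem theorem4p8:
  fixes C :: "real^'n::finite^'n" and A :: "'m::finite \<Rightarrow> real^'n^'n" and b :: "real^'m"
    and X Xd :: "real \<Rightarrow> real^'n^'n"
  assumes C_pd: "posdef C"
    and A_sym: "\<And>l. symmetric_mat (A l)"
    and A_indep: "lin_indep_family A"
    and Cinv_feas: "lin_feasible A b (matrix_inv C)"
    and deriv: "\<And>t. t \<ge> 0 \<Longrightarrow> (X has_vector_derivative Xd t) (at t within {0..})"
    and ode: "\<And>t. t \<ge> 0 \<Longrightarrow>
       vecM (Xd t) = Gmat C (X t) *v (transpose (calA A) *v
           (matrix_inv (calA A ** Gmat C (X t) ** transpose (calA A)) *v b)) - vecM (X t)"
    and X0: "posdef (X 0)"
  shows "(\<forall>t\<ge>0. posdef (X t) \<longrightarrow>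
            ((\<lambda>s. ln (det (X s))) has_real_derivative
               (b \<bullet> (matrix_inv (calA A ** Gmat C (X t) ** transpose (calA A)) *v b) - real CARD('n)))
               (at t within {0..}) \<and>
            b \<bullet> (matrix_inv (calA A ** Gmat C (X t) ** transpose (calA A)) *v b) - real CARD('n)
               \<ge> - real CARD('n))
         \<and> (\<forall>T\<ge>0. posdef (X T))"
proof -
  note hyps = C_pd A_sym A_indep Cinv_feas deriv ode X0
  have "((\<lambda>s. ln (det (X s))) has_real_derivative
      (b \<bullet> (matrix_inv (calA A ** Gmat C (X t) ** transpose (calA A)) *v b) - real CARD('n)))
      (at t within {0..})" if "t \<ge> 0" "posdef (X t)" for t
    by (rule ln_det_flow_derivative[OF hyps that])
  moreover have "0 \<le> b \<bullet> (matrix_inv (calA A ** Gmat C (X t) ** transpose (calA A)) *v b)"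
    if "t \<ge> 0" "posdef (X t)" for t
    by (rule inverse_form_nonneg[OF pos_form_gram[OF hyps that]])
  ultimately show ?thesis using flow_posdef[OF hyps] by auto
qed

end
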